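(* Let $n \ge 1$ and $t$ be integers with $0 \le t \le n/3$, and assume $n \ge 4$ if $t = 0$. Put $m = n - 3t$. Then the maximum of $\mathrm{mis}(G)$ over all graphs $G$ on $n$ vertices that contain no induced triangle matching of size $t+1$ equals \[ \mathrm{mis}_t(n)=\begin{cases} 3^t\cdot 2^{m/2} & \text{if } m \text{ is even},\\ 3^{t-1}\cdot 2^{(m+3)/2} & \text{if } m \text{ is odd and } t>0,\\ 5\cdot 2^{(n-5)/2} & \text{if } m \text{ is odd and } t=0. \end{cases} \]
   Context: All graphs are finite and simple. For a graph $G$, $\mathrm{mis}(G)$ denotes the number of maximal independent sets of $G$ (independent sets not properly contained in another independent set). An induced triangle matching in $G$ is a set of vertex-disjoint triangles in $G$ whose vertex set induces in $G$ exactly the disjoint union of these triangles (no edges of $G$ between different triangles); its size is the number of triangles. $\mathrm{mis}_t(n)$ is the maximum of $\mathrm{mis}(G)$ over all $n$-vertex graphs $G$ containing no induced triangle matching of size $t+1$. (The case $t=0$ corresponds to triangle-free graphs.) *)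

theory Defs
  imports Main
begin

definition simple_graph :: "'a set \<Rightarrow> 'a set set \<Rightarrow> bool" where
  "simple_graph V E \<longleftrightarrow> finite V \<and>
     (\<forall>e\<in>E. \<exists>u v. e = {u, v} \<and> u \<noteq> v \<and> u \<in> V \<and> v \<in> V)"

definition adj :: "'a set set \<Rightarrow> 'a \<Rightarrow> 'a \<Rightarrow> bool" where
  "adj E u v \<longleftrightarrow> {u, v} \<in> E"

definition independent_set :: "'a set \<Rightarrow> 'a set set \<Rightarrow> 'a set \<Rightarrow> bool" where
  "independent_set V E S \<longleftrightarrow> S \<subseteq> V \<and> (\<forall>u\<in>S. \<forall>v\<in>S. \<not> adj E u v)"

definition maximal_independent_set :: "'a set \<Rightarrow> 'a set set \<Rightarrow> 'a set \<Rightarrow> bool" where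
  "maximal_independent_set V E S \<longleftrightarrow> independent_set V E S \<and>
     (\<forall>S'. independent_set V E S' \<and> S \<subseteq> S' \<longrightarrow> S' = S)"

definition mis :: "'a set \<Rightarrow> 'a set set \<Rightarrow> nat" where
  "mis V E = card {S. maximal_independent_set V E S}"

definition triangle :: "'a set \<Rightarrow> 'a set set \<Rightarrow> 'a set \<Rightarrow> bool" where
  "triangle V E T \<longleftrightarrow> T \<subseteq> V \<and> card T = 3 \<and> (\<forall>u\<in>T. \<forall>v\<in>T. u \<noteq> v \<longrightarrow> adj E u v)"

definition induced_triangle_matching :: "'a set \<Rightarrow> 'a set set \<Rightarrow> 'a set set \<Rightarrow> bool" where
  "induced_triangle_matching V E M \<longleftrightarrow>
     (\<forall>T\<in>M. triangle V E T) \<and>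
     (\<forall>T1\<in>M. \<forall>T2\<in>M. T1 \<noteq> T2 \<longrightarrow> T1 \<inter> T2 = {} \<and>
        (\<forall>u\<in>T1. \<forall>v\<in>T2. \<not> adj E u v))"

definition has_induced_triangle_matching :: "'a set \<Rightarrow> 'a set set \<Rightarrow> nat \<Rightarrow> bool" where
  "has_induced_triangle_matching V E k \<longleftrightarrow>
     (\<exists>M. induced_triangle_matching V E M \<and> card M = k)"

definition mis_t :: "nat \<Rightarrow> nat \<Rightarrow> nat" where
  "mis_t t n = Max {mis {0..<n} E | E. simple_graph {0..<n} E \<and>
                       \<not> has_induced_triangle_matching {0..<n} E (t + 1)}"

end

theory Submission
  imports Defs
begin

text \<open>Write \<open>B(n)\<close> for \<open>mis_bound t n\<close>. The upper bound is proved by induction on \<open>n\<close>,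
  branching on a vertex \<open>v\<close> of minimum degree \<open>d\<close>: every maximal independent set contains a
  vertex \<open>u\<close> of \<open>N[v]\<close>, and removing \<open>u\<close> leaves a maximal independent set of \<open>G - N[u]\<close>.
  For \<open>d \<noteq> 2\<close> this gives \<open>(d + 1) B(n - d - 1)\<close>. For \<open>d = 2\<close> with neighbours \<open>a, b\<close>, a
  neighbour of degree \<open>\<ge> 3\<close> gives the branchings \<open>(3, 3, 4)\<close> (if \<open>v a b\<close> is a triangle, so
  \<open>t > 0\<close>) or \<open>(3, 4, 4)\<close>; an isolated triangle \<open>v a b\<close> gives \<open>3 B_{t-1}(n - 3)\<close>, since its
  removal leaves no induced matching of \<open>t\<close> triangles; and an induced path \<open>a' a v b b'\<close> gives
  \<open>(3, 5, 5, 5)\<close>, or \<open>(3, 4)\<close> if \<open>a' = b'\<close>. The bound is attained by disjoint unions of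
  \<open>t\<close> triangles and edges, or, for \<open>t = 0\<close> and odd \<open>n\<close>, of a pentagon and edges.\<close>

definition triangle_free_bound :: "nat \<Rightarrow> nat" where
  "triangle_free_bound n =
    (if n \<le> 1 then 1 else if n \<le> 3 then 2
     else if even n then 2 ^ (n div 2) else 5 * 2 ^ ((n - 5) div 2))"

text \<open>The value of the extremal graph with \<open>s\<close> triangles and \<open>m\<close> further vertices, taken in
  edges. For odd \<open>m\<close> a triangle plus the odd vertex is worth less than two edges (\<open>3 < 4\<close>);
  with no triangle available, the odd vertex joins two edges to a pentagon (\<open>5 > 4\<close>).\<close>
definition mis_extremal :: "nat \<Rightarrow> nat \<Rightarrow> nat" where
  "mis_extremal s m =
    (if s = 0 then triangle_free_bound m
     else if even m then 3 ^ s * 2 ^ (m div 2) else 3 ^ (s - 1) * 2 ^ ((m + 3) div 2))"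

text \<open>On fewer than \<open>3 t\<close> vertices the exclusion of \<open>t + 1\<close> induced triangles is vacuous, and
  the bound is that for the largest possible number \<open>n div 3\<close> of triangles.\<close>
definition mis_bound :: "nat \<Rightarrow> nat \<Rightarrow> nat" where
  "mis_bound t n = mis_extremal (min t (n div 3)) (n - 3 * min t (n div 3))"

lemma nat_parity_cases:
  fixes m :: nat
  obtains j where "m = 2 * j" | j where "m = 2 * j + 1"
  by (metis oddE evenE)

lemma triangle_free_bound_cases:
  fixes m :: nat
  obtains "m = 0" | "m = 1" | "m = 2" | "m = 3" | j where "m = 2 * j + 4" | j where "m = 2 * j + 5"
proof -
  consider "m < 4" | k where "m = k + 4"
    by (metis add.commute le_Suc_ex not_le)
  then show ?thesis
  proof cases
    case 1
    then show ?thesis using that by linarith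
  next
    case (2 k)
    then show ?thesis using that by (cases k rule: nat_parity_cases) auto
  qed
qed

lemma mis_extremal_Suc_mono: "mis_extremal s m \<le> mis_extremal s (Suc m)"
proof (cases s)
  case 0
  then show ?thesis
    by (cases m rule: triangle_free_bound_cases)
      (auto simp: mis_extremal_def triangle_free_bound_def power_add)
qed (cases m rule: nat_parity_cases; auto simp: mis_extremal_def power_add)

lemma mis_extremal_add_edge: "2 * mis_extremal s m \<le> mis_extremal s (m + 2)"
proof (cases s)
  case 0
  then show ?thesis
    by (cases m rule: triangle_free_bound_cases)
      (auto simp: mis_extremal_def triangle_free_bound_def power_add)
qed (cases m rule: nat_parity_cases; auto simp: mis_extremal_def power_add)

lemma mis_extremal_add_three:
  assumes "s > 0"
  shows "8 * mis_extremal s m \<le> 3 * mis_extremal s (m + 3)"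
proof -
  obtain s' where "s = Suc s'" using assms gr0_implies_Suc by blast
  then show ?thesis
    by (cases m rule: nat_parity_cases) (auto simp: mis_extremal_def power_add)
qed

lemma mis_extremal_0_add_three_weak:
  "m \<ge> 1 \<Longrightarrow> 5 * mis_extremal 0 m \<le> 2 * mis_extremal 0 (m + 3)"
  by (cases m rule: triangle_free_bound_cases)
    (auto simp: mis_extremal_def triangle_free_bound_def power_add)

lemma mis_extremal_add_triangle: "3 * mis_extremal s m \<le> mis_extremal (Suc s) m"
proof (cases s)
  case 0
  then show ?thesis
    by (cases m rule: triangle_free_bound_cases)
      (auto simp: mis_extremal_def triangle_free_bound_def power_add)
qed (cases m rule: nat_parity_cases; auto simp: mis_extremal_def power_add)

lemma mis_bound_eq: "3 * t \<le> n \<Longrightarrow> mis_bound t n = mis_extremal t (n - 3 * t)"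
  unfolding mis_bound_def by (simp add: min_def) (metis div_le_mono le_antisym
    nonzero_mult_div_cancel_left zero_neq_numeral)

lemma mis_bound_below:
  assumes "q < t" "r < 6"
  shows "mis_bound t (3 * q + r) =
    (if r < 3 then mis_extremal q r else mis_extremal (Suc q) (r - 3))"
proof (cases "r < 3")
  case True
  then have "(3 * q + r) div 3 = q" by simp
  then show ?thesis using assms True unfolding mis_bound_def by (simp add: min_def)
next
  case False
  then have "(3 * q + r) div 3 = Suc q" "min t (Suc q) = Suc q" using assms by simp_all
  then show ?thesis using False unfolding mis_bound_def by simp
qed

lemma below_or_above_3t:
  fixes n t :: nat
  obtains "3 * t \<le> n" | q r where "n = 3 * q + r" "q < t" "r = 0 \<or> r = 1 \<or> r = 2"
proof (cases "3 * t \<le> n")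
  case False
  have "n = 3 * (n div 3) + n mod 3" "n div 3 < t" "n mod 3 = 0 \<or> n mod 3 = 1 \<or> n mod 3 = 2"
    using False by (simp, linarith, arith)
  then show ?thesis by (rule that(2))
qed (rule that(1))

text \<open>Growth properties of \<open>mis_bound\<close> reduce, for \<open>n \<ge> 3 t\<close>, to those of \<open>mis_extremal\<close>;
  below \<open>3 t\<close> only finitely many residues occur.\<close>

lemma mis_bound_Suc_mono: "mis_bound t n \<le> mis_bound t (Suc n)"
proof (cases rule: below_or_above_3t[of t n])
  case 1
  then show ?thesis
    using mis_extremal_Suc_mono[of t "n - 3 * t"] by (simp add: mis_bound_eq Suc_diff_le)
next
  case (2 q r)
  have "mis_bound t n = mis_extremal q r"
    using mis_bound_below[of q t r] 2 by auto
  moreover have "mis_bound t (Suc n) =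
      (if r + 1 < 3 then mis_extremal q (r + 1) else mis_extremal (Suc q) (r + 1 - 3))"
    using mis_bound_below[of q t "r + 1"] 2 by auto
  ultimately show ?thesis using 2(3) mis_extremal_Suc_mono[of q r]
    by (cases q) (auto simp: mis_extremal_def triangle_free_bound_def)
qed

lemma mis_bound_mono: "a \<le> b \<Longrightarrow> mis_bound t a \<le> mis_bound t b"
  by (induction b rule: dec_induct) (auto intro: order_trans mis_bound_Suc_mono)

lemma mis_bound_add_edge: "2 * mis_bound t n \<le> mis_bound t (n + 2)"
proof (cases rule: below_or_above_3t[of t n])
  case 1
  then have "3 * t \<le> n + 2" and shift: "n + 2 - 3 * t = n - 3 * t + 2" by simp_all
  show ?thesis
    unfolding mis_bound_eq[OF 1] mis_bound_eq[OF \<open>3 * t \<le> n + 2\<close>] shift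
    by (rule mis_extremal_add_edge)
next
  case (2 q r)
  have "mis_bound t n = mis_extremal q r"
    using mis_bound_below[of q t r] 2 by auto
  moreover have "mis_bound t (n + 2) =
      (if r + 2 < 3 then mis_extremal q (r + 2) else mis_extremal (Suc q) (r + 2 - 3))"
    using mis_bound_below[of q t "r + 2"] 2 by (auto simp: add.assoc)
  ultimately show ?thesis using 2(3) mis_extremal_add_edge[of q r]
    by (cases q) (auto simp: mis_extremal_def triangle_free_bound_def)
qed

lemma mis_bound_add_three:
  assumes "t > 0"
  shows "8 * mis_bound t n \<le> 3 * mis_bound t (n + 3)"
proof (cases rule: below_or_above_3t[of t n])
  case 1
  then have "3 * t \<le> n + 3" and shift: "n + 3 - 3 * t = n - 3 * t + 3" by simp_all
  show ?thesis
    unfolding mis_bound_eq[OF 1] mis_bound_eq[OF \<open>3 * t \<le> n + 3\<close>] shift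
    by (rule mis_extremal_add_three[OF assms])
next
  case (2 q r)
  have "mis_bound t n = mis_extremal q r"
    using mis_bound_below[of q t r] 2 by auto
  moreover have "mis_bound t (n + 3) = mis_extremal (Suc q) r"
    using mis_bound_below[of q t "r + 3"] 2 by (auto simp: add.assoc)
  ultimately show ?thesis using 2(3)
    by (cases q) (auto simp: mis_extremal_def triangle_free_bound_def)
qed

lemma mis_bound_add_three_weak:
  assumes "n \<ge> 1"
  shows "5 * mis_bound t n \<le> 2 * mis_bound t (n + 3)"
proof (cases "t = 0")
  case True
  then show ?thesis using mis_extremal_0_add_three_weak[of n] assms by (simp add: mis_bound_eq)
next
  case False
  then show ?thesis using mis_bound_add_three[of t n] by linarith
qed

lemma mis_bound_add_triangle: "3 * mis_bound t n \<le> mis_bound (Suc t) (n + 3)"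
proof -
  have "min (Suc t) ((n + 3) div 3) = Suc (min t (n div 3))" by simp
  then show ?thesis unfolding mis_bound_def using mis_extremal_add_triangle by simp
qed

lemma mis_bound_add_clique:
  "k \<ge> 4 \<Longrightarrow> k * mis_bound t n \<le> mis_bound t (n + k)"
proof (induction k arbitrary: n rule: less_induct)
  case (less k)
  have two_edges: "4 * mis_bound t n \<le> mis_bound t (n + 4)" for n
    using mis_bound_add_edge[of t n] mis_bound_add_edge[of t "n + 2"] by (simp add: numeral_eq_Suc)
  consider "k = 4" | "k = 5" | "k \<ge> 6" using less.prems by linarith
  then show ?case
  proof cases
    case 2
    then show ?thesis
      using mis_bound_add_edge[of t n] mis_bound_add_three_weak[of "n + 2" t]
      by (simp add: numeral_eq_Suc)
  next
    case 3
    have "k * mis_bound t n \<le> ((k - 2) * 2) * mis_bound t n"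
      using 3 by (intro mult_le_mono1) linarith
    also have "\<dots> = (k - 2) * (2 * mis_bound t n)" by simp
    also have "\<dots> \<le> (k - 2) * mis_bound t (n + 2)"
      by (intro mult_le_mono2 mis_bound_add_edge)
    also have "\<dots> \<le> mis_bound t (n + 2 + (k - 2))"
      using 3 by (intro less.IH) auto
    also have "n + 2 + (k - 2) = n + k" using 3 by simp
    finally show ?thesis .
  qed (use two_edges in simp)
qed

lemma mis_bound_branch_closed_nbhd:
  assumes "k \<noteq> 3" "k \<ge> 1" "k \<le> n"
  shows "k * mis_bound t (n - k) \<le> mis_bound t n"
proof -
  consider "k = 1" | "k = 2" | "k \<ge> 4" using assms by linarith
  then show ?thesis
  proof cases
    case 2
    then have "n - 2 + 2 = n" using assms by simp
    then show ?thesis using 2 mis_bound_add_edge[of t "n - 2"] by simp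
  next
    case 3
    then show ?thesis using assms mis_bound_add_clique[of k t "n - k"] by simp
  qed (use assms in \<open>simp add: mis_bound_mono\<close>)
qed

lemma mis_bound_branch_344:
  assumes "n \<ge> 4"
  shows "mis_bound t (n - 3) + 2 * mis_bound t (n - 4) \<le> mis_bound t n"
proof -
  obtain p where p: "n = p + 4" using assms by (metis add.commute le_Suc_ex)
  have "mis_bound t (p + 1) \<le> mis_bound t (p + 2)" by (rule mis_bound_mono) simp
  moreover have "2 * mis_bound t p \<le> mis_bound t (p + 2)" by (rule mis_bound_add_edge)
  moreover have "2 * mis_bound t (p + 2) \<le> mis_bound t (p + 4)"
    using mis_bound_add_edge[of t "p + 2"] by (simp add: numeral_eq_Suc)
  ultimately show ?thesis unfolding p by simp
qed

lemma mis_bound_branch_3555: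
  assumes "n \<ge> 5"
  shows "mis_bound t (n - 3) + 3 * mis_bound t (n - 5) \<le> mis_bound t n"
proof -
  obtain p where p: "n = p + 5" using assms by (metis add.commute le_Suc_ex)
  have "2 * mis_bound t p \<le> mis_bound t (p + 2)" by (rule mis_bound_add_edge)
  moreover have "5 * mis_bound t (p + 2) \<le> 2 * mis_bound t (p + 5)"
    using mis_bound_add_three_weak[of "p + 2" t] by (simp add: numeral_eq_Suc)
  ultimately show ?thesis unfolding p by simp
qed

lemma mis_bound_branch_334:
  assumes "n \<ge> 4" "t > 0"
  shows "2 * mis_bound t (n - 3) + mis_bound t (n - 4) \<le> mis_bound t n"
proof -
  obtain p where p: "n = p + 4" using assms by (metis add.commute le_Suc_ex)
  have "8 * mis_bound t (p + 1) \<le> 3 * mis_bound t (p + 4)"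
    using mis_bound_add_three[OF assms(2), of "p + 1"] by (simp add: numeral_eq_Suc)
  moreover have "4 * mis_bound t p \<le> mis_bound t (p + 4)"
    using mis_bound_add_clique[of 4 t p] by simp
  ultimately show ?thesis unfolding p by simp
qed

text \<open>The induction passes to \<open>V - W\<close> with the same edge set \<open>E\<close>, which is then no longer a
  \<open>simple_graph\<close> on \<open>V - W\<close>; loop-freeness is all that survives and all that is needed.\<close>
definition loop_free :: "'a set set \<Rightarrow> bool" where
  "loop_free E \<longleftrightarrow> (\<forall>u. \<not> adj E u u)"

definition neighbours :: "'a set \<Rightarrow> 'a set set \<Rightarrow> 'a \<Rightarrow> 'a set" where
  "neighbours V E v = {w \<in> V. adj E v w}"

definition closed_neighbourhood :: "'a set \<Rightarrow> 'a set set \<Rightarrow> 'a set \<Rightarrow> 'a set" where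
  "closed_neighbourhood V E X = X \<union> {w \<in> V. \<exists>x\<in>X. adj E x w}"

definition mis_through :: "'a set \<Rightarrow> 'a set set \<Rightarrow> 'a set \<Rightarrow> 'a set \<Rightarrow> 'a set set" where
  "mis_through V E X Y = {S. maximal_independent_set V E S \<and> X \<subseteq> S \<and> S \<inter> Y = {}}"

lemma adj_commute: "adj E u v = adj E v u"
  by (simp add: adj_def insert_commute)

lemma simple_graph_loop_free: "simple_graph V E \<Longrightarrow> loop_free E"
  unfolding simple_graph_def loop_free_def adj_def by (metis doubleton_eq_iff insert_absorb2)

lemma maximal_independent_set_iff_dominating:
  assumes "loop_free E"
  shows "maximal_independent_set V E S \<longleftrightarrow>
    independent_set V E S \<and> (\<forall>w\<in>V - S. \<exists>s\<in>S. adj E w s)"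
proof
  assume max: "maximal_independent_set V E S"
  then have ind: "independent_set V E S" by (simp add: maximal_independent_set_def)
  have "\<exists>s\<in>S. adj E w s" if w: "w \<in> V - S" for w
  proof (rule ccontr)
    assume "\<not> (\<exists>s\<in>S. adj E w s)"
    then have "independent_set V E (insert w S)"
      using ind w assms unfolding independent_set_def loop_free_def by (auto simp: adj_commute)
    then show False using max w unfolding maximal_independent_set_def by blast
  qed
  then show "independent_set V E S \<and> (\<forall>w\<in>V - S. \<exists>s\<in>S. adj E w s)" using ind by blast
next
  assume "independent_set V E S \<and> (\<forall>w\<in>V - S. \<exists>s\<in>S. adj E w s)"
  then show "maximal_independent_set V E S"
    unfolding maximal_independent_set_def independent_set_def by blast
qed

lemma finite_maximal_independent_sets:
  "finite V \<Longrightarrow> finite {S. maximal_independent_set V E S}"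
  by (rule finite_subset[of _ "Pow V"])
    (auto simp: maximal_independent_set_def independent_set_def)

lemma mis_empty: "mis {} E = 1"
proof -
  have "{S. maximal_independent_set {} E S} = {{}}"
    unfolding maximal_independent_set_def independent_set_def by auto
  then show ?thesis unfolding mis_def by simp
qed

lemma finite_mis_through: "finite V \<Longrightarrow> finite (mis_through V E X Y)"
  by (rule finite_subset[OF _ finite_maximal_independent_sets[of V E]]) (auto simp: mis_through_def)

lemma mis_through_adjacent:
  "x \<in> X \<Longrightarrow> y \<in> X \<Longrightarrow> adj E x y \<Longrightarrow> mis_through V E X Y = {}"
  unfolding mis_through_def maximal_independent_set_def independent_set_def by blast

lemma maximal_independent_set_meets_closed_neighbourhood:
  assumes "loop_free E" "maximal_independent_set V E S" "v \<in> V"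
  shows "v \<in> S \<or> (\<exists>u\<in>neighbours V E v. u \<in> S)"
proof -
  have "independent_set V E S" "\<forall>w\<in>V - S. \<exists>s\<in>S. adj E w s"
    using assms maximal_independent_set_iff_dominating[OF assms(1)] by auto
  then show ?thesis using assms(3) unfolding neighbours_def independent_set_def by blast
qed

lemma closed_neighbourhood_subset: "X \<subseteq> V \<Longrightarrow> closed_neighbourhood V E X \<subseteq> V"
  unfolding closed_neighbourhood_def by auto

lemma closed_neighbourhood_singleton:
  "closed_neighbourhood V E {u} = insert u (neighbours V E u)"
  unfolding closed_neighbourhood_def neighbours_def by auto

lemma finite_neighbours: "finite V \<Longrightarrow> finite (neighbours V E u)"
  unfolding neighbours_def by simp

lemma card_closed_neighbourhood_singleton:
  assumes "loop_free E" "finite V"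
  shows "card (closed_neighbourhood V E {u}) = Suc (card (neighbours V E u))"
proof -
  have "u \<notin> neighbours V E u" using assms unfolding neighbours_def loop_free_def by auto
  then show ?thesis
    unfolding closed_neighbourhood_singleton using finite_neighbours[OF assms(2)] by simp
qed

lemma maximal_independent_set_Diff_closed_neighbourhood:
  assumes lf: "loop_free E" and max: "maximal_independent_set V E S"
    and "X \<subseteq> S" "S \<inter> Y = {}"
  shows "maximal_independent_set (V - (closed_neighbourhood V E X \<union> Y)) E (S - X)"
proof -
  have ind: "independent_set V E S" and dom: "\<forall>w\<in>V - S. \<exists>s\<in>S. adj E w s"
    using max maximal_independent_set_iff_dominating[OF lf] by auto
  have "S - X \<subseteq> V - (closed_neighbourhood V E X \<union> Y)"
    using ind assms(3,4) unfolding closed_neighbourhood_def independent_set_def by auto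
  then have "independent_set (V - (closed_neighbourhood V E X \<union> Y)) E (S - X)"
    using ind by (auto simp: independent_set_def)
  moreover have "\<exists>s\<in>S - X. adj E w s"
    if w: "w \<in> (V - (closed_neighbourhood V E X \<union> Y)) - (S - X)" for w
  proof -
    from w have "w \<in> V - S" unfolding closed_neighbourhood_def by blast
    then obtain s where "s \<in> S" "adj E w s" using dom by blast
    moreover from this have "s \<notin> X"
      using w unfolding closed_neighbourhood_def by (auto simp: adj_commute)
    ultimately show ?thesis by blast
  qed
  ultimately show ?thesis using maximal_independent_set_iff_dominating[OF lf] by blast
qed

lemma card_mis_through_le:
  assumes "loop_free E" "finite V"
  shows "card (mis_through V E X Y) \<le> mis (V - (closed_neighbourhood V E X \<union> Y)) E"
  unfolding mis_def
proof (rule card_inj_on_le)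
  show "inj_on (\<lambda>S. S - X) (mis_through V E X Y)"
    unfolding inj_on_def mis_through_def by blast
  show "(\<lambda>S. S - X) ` mis_through V E X Y \<subseteq>
      {S. maximal_independent_set (V - (closed_neighbourhood V E X \<union> Y)) E S}"
    using maximal_independent_set_Diff_closed_neighbourhood[OF assms(1)]
    unfolding mis_through_def by blast
qed (use assms in \<open>simp add: finite_maximal_independent_sets\<close>)

lemma card_le_sum_cover3:
  assumes "finite P" "finite Q" "finite R" "X \<subseteq> P \<union> Q \<union> R"
  shows "card X \<le> card P + card Q + card R"
proof -
  have "card X \<le> card (P \<union> Q \<union> R)" using assms by (intro card_mono) auto
  also have "\<dots> \<le> card P + card Q + card R"
    using card_Un_le[of "P \<union> Q" R] card_Un_le[of P Q] by simp
  finally show ?thesis .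
qed

lemma card_le_sum_cover4:
  assumes "finite P" "finite Q" "finite R" "finite U" "X \<subseteq> P \<union> Q \<union> R \<union> U"
  shows "card X \<le> card P + card Q + card R + card U"
proof -
  have "card X \<le> card (P \<union> Q \<union> R) + card U"
    using assms card_Un_le[of "P \<union> Q \<union> R" U] by (metis card_mono finite_UnI order_trans)
  then show ?thesis using card_le_sum_cover3[of P Q R "P \<union> Q \<union> R"] assms by simp
qed

lemma card_2_obtain_other:
  assumes "card A = 2" "x \<in> A"
  obtains y where "A = {x, y}" "y \<noteq> x"
proof -
  obtain p q where "A = {p, q}" "p \<noteq> q" using assms(1) by (auto simp: card_2_iff)
  then show ?thesis using that assms(2) by (metis insert_commute insertE singletonD)
qed

lemma triangleI:
  assumes "loop_free E" "x \<in> V" "y \<in> V" "z \<in> V" "adj E x y" "adj E y z" "adj E x z"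
  shows "triangle V E {x, y, z}"
proof -
  have "x \<noteq> y" "y \<noteq> z" "x \<noteq> z" using assms unfolding loop_free_def by metis+
  then show ?thesis unfolding triangle_def using assms by (auto simp: adj_commute)
qed

lemma triangleE:
  assumes "triangle V E T"
  obtains x y z where "T = {x, y, z}" "x \<noteq> y" "y \<noteq> z" "x \<noteq> z" "x \<in> V" "y \<in> V" "z \<in> V"
    "adj E x y" "adj E y z" "adj E x z"
proof -
  obtain x y z where "T = {x, y, z}" "x \<noteq> y" "y \<noteq> z" "x \<noteq> z"
    using assms unfolding triangle_def by (auto simp: card_3_iff)
  then show ?thesis using that assms unfolding triangle_def by auto
qed

lemma has_induced_triangle_matching_1:
  "triangle V E T \<Longrightarrow> has_induced_triangle_matching V E 1"
  unfolding has_induced_triangle_matching_def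
  by (rule exI[of _ "{T}"]) (simp add: induced_triangle_matching_def)

lemma has_induced_triangle_matching_mono:
  assumes "has_induced_triangle_matching V' E k" "V' \<subseteq> V"
  shows "has_induced_triangle_matching V E k"
proof -
  obtain M where M: "induced_triangle_matching V' E M" "card M = k"
    using assms(1) unfolding has_induced_triangle_matching_def by blast
  have "triangle V E T" if "T \<in> M" for T
  proof -
    have "triangle V' E T" using M(1) that by (simp add: induced_triangle_matching_def)
    then show ?thesis using assms(2) by (auto simp: triangle_def)
  qed
  then have "induced_triangle_matching V E M"
    using M(1) by (simp add: induced_triangle_matching_def)
  then show ?thesis using M(2) unfolding has_induced_triangle_matching_def by blast
qed

lemma has_induced_triangle_matching_insert:
  assumes tri: "triangle V E T" and isolated: "\<And>u w. u \<in> T \<Longrightarrow> w \<in> V - T \<Longrightarrow> \<not> adj E u w"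
    and "finite V" "has_induced_triangle_matching (V - T) E k"
  shows "has_induced_triangle_matching V E (Suc k)"
proof -
  obtain M where M: "induced_triangle_matching (V - T) E M" "card M = k"
    using assms(4) unfolding has_induced_triangle_matching_def by blast
  have sub: "T' \<subseteq> V - T" if "T' \<in> M" for T'
    using M(1) that unfolding induced_triangle_matching_def triangle_def by blast
  have tri': "triangle V E T'" if "T' \<in> M" for T'
  proof -
    have "triangle (V - T) E T'" using M(1) that by (simp add: induced_triangle_matching_def)
    then show ?thesis by (auto simp: triangle_def)
  qed
  have "finite M" by (rule finite_subset[of _ "Pow V"]) (use sub assms(3) in auto)
  have "T \<notin> M"
  proof
    assume "T \<in> M"
    then have "T = {}" using sub by blast
    then show False using tri by (simp add: triangle_def)
  qed
  have pairwise: "T1 \<inter> T2 = {} \<and> (\<forall>u\<in>T1. \<forall>w\<in>T2. \<not> adj E u w)"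
    if T12: "T1 \<in> insert T M" "T2 \<in> insert T M" and ne: "T1 \<noteq> T2" for T1 T2
  proof -
    consider "T1 = T" "T2 \<in> M" | "T1 \<in> M" "T2 = T" | "T1 \<in> M" "T2 \<in> M"
      using T12 ne by blast
    then show ?thesis
    proof cases
      case 1
      have "\<not> adj E u w" if "u \<in> T1" "w \<in> T2" for u w
        using isolated[of u w] sub[of T2] 1 that by auto
      then show ?thesis using sub[of T2] 1 by blast
    next
      case 2
      have "\<not> adj E u w" if "u \<in> T1" "w \<in> T2" for u w
        using isolated[of w u] sub[of T1] 2 that by (auto simp: adj_commute)
      then show ?thesis using sub[of T1] 2 by blast
    next
      case 3
      with M(1) ne show ?thesis by (simp add: induced_triangle_matching_def)
    qed
  qed
  have "induced_triangle_matching V E (insert T M)"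
    unfolding induced_triangle_matching_def
  proof (intro conjI)
    show "\<forall>T'\<in>insert T M. triangle V E T'" using tri tri' by blast
  qed (intro ballI impI pairwise)
  moreover have "card (insert T M) = Suc k" using \<open>finite M\<close> \<open>T \<notin> M\<close> M(2) by simp
  ultimately show ?thesis unfolding has_induced_triangle_matching_def by blast
qed

text \<open>A maximal independent set avoiding \<open>v\<close> contains \<open>a\<close> or \<open>b\<close>; if it contains only one
  of them, it must dominate the other one through \<open>b'\<close> resp. \<open>a'\<close>.\<close>
lemma maximal_independent_set_meets_path:
  assumes lf: "loop_free E" and max: "maximal_independent_set V E S" and "v \<in> V" "a \<in> V" "b \<in> V"
    and "neighbours V E v = {a, b}" "neighbours V E a = {v, a'}" "neighbours V E b = {v, b'}"
  shows "v \<in> S \<or> {a, b} \<subseteq> S \<or> {a, b'} \<subseteq> S \<or> {b, a'} \<subseteq> S"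
proof -
  have "adj E v a" "adj E v b" using assms(6) unfolding neighbours_def by auto
  then have "\<not> (v \<in> S \<and> a \<in> S)" "\<not> (v \<in> S \<and> b \<in> S)"
    using max unfolding maximal_independent_set_def independent_set_def by blast+
  moreover have "v \<in> S \<or> a \<in> S \<or> b \<in> S" "a \<in> S \<or> v \<in> S \<or> a' \<in> S"
    "b \<in> S \<or> v \<in> S \<or> b' \<in> S"
    using maximal_independent_set_meets_closed_neighbourhood[OF lf max, of v]
      maximal_independent_set_meets_closed_neighbourhood[OF lf max, of a]
      maximal_independent_set_meets_closed_neighbourhood[OF lf max, of b] assms(3-8)
    by auto
  ultimately show ?thesis by auto
qed

locale mis_bound_induction =
  fixes V :: "'a set" and E :: "'a set set" and t :: nat
  assumes loop_free: "loop_free E" and finite_V: "finite V"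
    and no_matching: "\<not> has_induced_triangle_matching V E (t + 1)"
    and mis_smaller: "\<And>W s. W \<subseteq> V \<Longrightarrow> W \<noteq> {} \<Longrightarrow>
      \<not> has_induced_triangle_matching (V - W) E (s + 1) \<Longrightarrow>
      mis (V - W) E \<le> mis_bound s (card V - card W)"
begin

lemma card_mis_through_le_bound:
  assumes "X \<subseteq> V" "Y \<subseteq> V" "X \<noteq> {}" "k \<le> card (closed_neighbourhood V E X \<union> Y)"
  shows "card (mis_through V E X Y) \<le> mis_bound t (card V - k)"
proof -
  let ?W = "closed_neighbourhood V E X \<union> Y"
  have W: "?W \<subseteq> V" "?W \<noteq> {}"
    using assms closed_neighbourhood_subset[of X V E] unfolding closed_neighbourhood_def by auto
  have "\<not> has_induced_triangle_matching (V - ?W) E (t + 1)"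
    using no_matching has_induced_triangle_matching_mono[of "V - ?W" E "t + 1" V] by blast
  then have "mis (V - ?W) E \<le> mis_bound t (card V - card ?W)"
    by (rule mis_smaller[OF W])
  moreover have "mis_bound t (card V - card ?W) \<le> mis_bound t (card V - k)"
    using assms(4) by (intro mis_bound_mono) simp
  ultimately show ?thesis
    using card_mis_through_le[OF loop_free finite_V, of X Y] by linarith
qed

lemma card_closed_neighbourhood_le:
  "X \<subseteq> V \<Longrightarrow> Y \<subseteq> V \<Longrightarrow> card (closed_neighbourhood V E X \<union> Y) \<le> card V"
  using closed_neighbourhood_subset[of X V E] finite_V by (intro card_mono) auto

lemma card_mis_through_vertex_le:
  assumes "u \<in> V" "k \<le> Suc (card (neighbours V E u))"
  shows "card (mis_through V E {u} {}) \<le> mis_bound t (card V - k)"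
  using assms card_closed_neighbourhood_singleton[OF loop_free finite_V, of u]
  by (intro card_mis_through_le_bound) auto

lemma mis_le_sum_mis_through3:
  assumes "\<And>S. maximal_independent_set V E S \<Longrightarrow> S \<in> P \<union> Q \<union> R"
    "finite P" "finite Q" "finite R"
  shows "mis V E \<le> card P + card Q + card R"
  unfolding mis_def using assms by (intro card_le_sum_cover3) auto

lemma mis_le_bound_if_min_degree_ne_2:
  assumes v: "v \<in> V" and min: "\<And>u. u \<in> V \<Longrightarrow> card (neighbours V E v) \<le> card (neighbours V E u)"
    and d: "card (neighbours V E v) \<noteq> 2"
  shows "mis V E \<le> mis_bound t (card V)"
proof -
  define d where "d = card (neighbours V E v)"
  let ?N = "insert v (neighbours V E v)"
  have N_fin: "finite ?N" using finite_neighbours[OF finite_V] by simp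
  have N_sub: "?N \<subseteq> V" using v by (auto simp: neighbours_def)
  have card_N: "card ?N = d + 1"
    using card_closed_neighbourhood_singleton[OF loop_free finite_V, of v]
    unfolding d_def closed_neighbourhood_singleton by simp
  have "{S. maximal_independent_set V E S} \<subseteq> (\<Union>u\<in>?N. mis_through V E {u} {})"
    using maximal_independent_set_meets_closed_neighbourhood[OF loop_free _ v]
    unfolding mis_through_def by blast
  then have "mis V E \<le> card (\<Union>u\<in>?N. mis_through V E {u} {})"
    unfolding mis_def using N_fin finite_mis_through[OF finite_V] by (intro card_mono) auto
  also have "\<dots> \<le> (\<Sum>u\<in>?N. card (mis_through V E {u} {}))"
    by (rule card_UN_le[OF N_fin])
  also have "\<dots> \<le> (\<Sum>u\<in>?N. mis_bound t (card V - (d + 1)))"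
    using N_sub min d_def by (intro sum_mono card_mis_through_vertex_le) auto
  also have "\<dots> = (d + 1) * mis_bound t (card V - (d + 1))" using card_N by simp
  also have "\<dots> \<le> mis_bound t (card V)"
    using d card_N card_mono[OF finite_V N_sub] unfolding d_def
    by (intro mis_bound_branch_closed_nbhd) auto
  finally show ?thesis .
qed

lemma mis_le_bound_if_neighbour_degree_ge_3:
  assumes v: "v \<in> V" and Nv: "neighbours V E v = {a, b}" "a \<noteq> b"
    and min: "\<And>u. u \<in> V \<Longrightarrow> 2 \<le> card (neighbours V E u)"
    and b: "3 \<le> card (neighbours V E b)"
  shows "mis V E \<le> mis_bound t (card V)"
proof -
  have aV: "a \<in> V" "adj E v a" and bV: "b \<in> V" "adj E v b"
    using Nv(1) unfolding neighbours_def by auto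
  have card_Nb: "4 \<le> card (closed_neighbourhood V E {b} \<union> {})"
    using card_closed_neighbourhood_singleton[OF loop_free finite_V, of b] b by simp
  then have n4: "4 \<le> card V" using card_closed_neighbourhood_le[of "{b}" "{}"] bV by simp
  have dom: "S \<in> mis_through V E {v} {} \<or> S \<in> mis_through V E {a} {} \<or> S \<in> mis_through V E {b} {}"
    if "maximal_independent_set V E S" for S
    using maximal_independent_set_meets_closed_neighbourhood[OF loop_free that v] Nv(1) that
    unfolding mis_through_def by auto
  have through_v: "card (mis_through V E {v} {}) \<le> mis_bound t (card V - 3)"
    and through_b: "card (mis_through V E {b} {}) \<le> mis_bound t (card V - 4)"
    using card_mis_through_vertex_le min v bV b by auto
  show ?thesis
  proof (cases "adj E a b")
    case True
    text \<open>\<open>v, a, b\<close> is a triangle, so \<open>t > 0\<close> and the weaker recurrence suffices.\<close>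
    have "t > 0"
    proof (rule ccontr)
      assume "\<not> t > 0"
      moreover have "has_induced_triangle_matching V E 1"
        by (rule has_induced_triangle_matching_1, rule triangleI[OF loop_free v aV(1) bV(1)])
          (use aV bV True in auto)
      ultimately show False using no_matching by simp
    qed
    have "mis V E \<le> card (mis_through V E {v} {}) + card (mis_through V E {a} {})
        + card (mis_through V E {b} {})"
      using dom by (intro mis_le_sum_mis_through3 finite_mis_through[OF finite_V]) blast
    also have "\<dots> \<le> mis_bound t (card V - 3) + mis_bound t (card V - 3) + mis_bound t (card V - 4)"
      using through_v through_b card_mis_through_vertex_le[of a 3] min aV by (intro add_mono) auto
    also have "\<dots> \<le> mis_bound t (card V)"
      using mis_bound_branch_334[OF n4 \<open>t > 0\<close>] by simp
    finally show ?thesis .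
  next
    case False
    text \<open>Sets through \<open>a\<close> may be assumed to avoid \<open>b\<close>, which is not a neighbour of \<open>a\<close>.\<close>
    have "b \<notin> closed_neighbourhood V E {a}"
      using False Nv(2) unfolding closed_neighbourhood_singleton neighbours_def by auto
    moreover have "3 \<le> card (closed_neighbourhood V E {a})"
      using card_closed_neighbourhood_singleton[OF loop_free finite_V, of a] min aV by simp
    ultimately have "4 \<le> card (closed_neighbourhood V E {a} \<union> {b})"
      using closed_neighbourhood_subset[of "{a}" V E] aV finite_V by (simp add: finite_subset)
    then have through_a: "card (mis_through V E {a} {b}) \<le> mis_bound t (card V - 4)"
      using aV bV by (intro card_mis_through_le_bound) auto
    have "mis V E \<le> card (mis_through V E {v} {}) + card (mis_through V E {b} {})
        + card (mis_through V E {a} {b})"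
      using dom by (intro mis_le_sum_mis_through3 finite_mis_through[OF finite_V])
        (auto simp: mis_through_def)
    also have "\<dots> \<le> mis_bound t (card V - 3) + mis_bound t (card V - 4) + mis_bound t (card V - 4)"
      using through_v through_b through_a by (intro add_mono)
    also have "\<dots> \<le> mis_bound t (card V)"
      using mis_bound_branch_344[OF n4, of t] by simp
    finally show ?thesis .
  qed
qed

lemma mis_le_bound_if_isolated_triangle:
  assumes v: "v \<in> V" and Nv: "neighbours V E v = {a, b}" "a \<noteq> b" and ab: "adj E a b"
    and deg: "card (neighbours V E a) = 2" "card (neighbours V E b) = 2"
  shows "mis V E \<le> mis_bound t (card V)"
proof -
  have aV: "a \<in> V" "adj E v a" and bV: "b \<in> V" "adj E v b"
    using Nv(1) unfolding neighbours_def by auto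
  have "v \<noteq> a" "v \<noteq> b" using loop_free aV(2) bV(2) unfolding loop_free_def by metis+
  moreover have "v \<in> neighbours V E a" "b \<in> neighbours V E a"
    "v \<in> neighbours V E b" "a \<in> neighbours V E b"
    using v aV bV ab unfolding neighbours_def by (auto simp: adj_commute)
  ultimately have Na: "neighbours V E a = {v, b}" and Nb: "neighbours V E b = {v, a}"
    using deg finite_neighbours[OF finite_V]
    by (metis card_2_iff card_subset_eq empty_subsetI insert_subset)+
  define T where "T = {v, a, b}"
  have tri: "triangle V E T"
    unfolding T_def by (rule triangleI[OF loop_free v aV(1) bV(1)]) (use aV bV ab in auto)
  have closed_T: "closed_neighbourhood V E {u} \<union> {} = T" if "u \<in> T" for u
    using that Nv(1) Na Nb unfolding T_def closed_neighbourhood_singleton by auto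
  have isolated: "\<not> adj E u w" if "u \<in> T" "w \<in> V - T" for u w
    using that Nv(1) Na Nb unfolding T_def neighbours_def by auto
  obtain s where s: "t = Suc s"
    using no_matching has_induced_triangle_matching_1[OF tri] by (cases t) auto
  have "\<not> has_induced_triangle_matching (V - T) E (s + 1)"
    using has_induced_triangle_matching_insert[OF tri isolated finite_V] no_matching s by auto
  then have "mis (V - T) E \<le> mis_bound s (card V - 3)"
    using mis_smaller[of T s] tri unfolding triangle_def T_def by simp
  then have through: "card (mis_through V E {u} {}) \<le> mis_bound s (card V - 3)" if "u \<in> T" for u
    using card_mis_through_le[OF loop_free finite_V, of "{u}" "{}"] closed_T[OF that] by simp
  have "mis V E \<le> card (mis_through V E {v} {}) + card (mis_through V E {a} {})
      + card (mis_through V E {b} {})"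
    using maximal_independent_set_meets_closed_neighbourhood[OF loop_free _ v] Nv(1)
    by (intro mis_le_sum_mis_through3 finite_mis_through[OF finite_V]) (auto simp: mis_through_def)
  also have "\<dots> \<le> 3 * mis_bound s (card V - 3)"
    using through[of v] through[of a] through[of b] unfolding T_def by simp
  also have "\<dots> \<le> mis_bound t (card V)"
    using mis_bound_add_triangle[of s "card V - 3"] tri card_mono[OF finite_V, of T] s
    unfolding triangle_def by simp
  finally show ?thesis .
qed

lemma mis_le_sum_path_branches:
  assumes "v \<in> V" "a \<in> V" "b \<in> V" "neighbours V E v = {a, b}"
    "neighbours V E a = {v, a'}" "neighbours V E b = {v, b'}"
  shows "mis V E \<le> card (mis_through V E {v} {}) + card (mis_through V E {a, b} {})
      + card (mis_through V E {a, b'} {}) + card (mis_through V E {b, a'} {})"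
proof -
  have "{S. maximal_independent_set V E S} \<subseteq> mis_through V E {v} {} \<union>
      mis_through V E {a, b} {} \<union> mis_through V E {a, b'} {} \<union> mis_through V E {b, a'} {}"
  proof
    fix S assume "S \<in> {S. maximal_independent_set V E S}"
    then have max: "maximal_independent_set V E S" by simp
    have "v \<in> S \<or> {a, b} \<subseteq> S \<or> {a, b'} \<subseteq> S \<or> {b, a'} \<subseteq> S"
      by (rule maximal_independent_set_meets_path[OF loop_free max assms])
    then show "S \<in> mis_through V E {v} {} \<union> mis_through V E {a, b} {} \<union>
        mis_through V E {a, b'} {} \<union> mis_through V E {b, a'} {}"
      using max unfolding mis_through_def by auto
  qed
  then show ?thesis
    unfolding mis_def by (intro card_le_sum_cover4 finite_mis_through[OF finite_V])
qed

lemma mis_le_bound_if_induced_path: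
  assumes v: "v \<in> V" and Nv: "neighbours V E v = {a, b}" "a \<noteq> b" and ab: "\<not> adj E a b"
    and deg: "card (neighbours V E a) = 2" "card (neighbours V E b) = 2"
  shows "mis V E \<le> mis_bound t (card V)"
proof -
  have aV: "a \<in> V" "adj E v a" and bV: "b \<in> V" "adj E v b"
    using Nv(1) unfolding neighbours_def by auto
  have va: "v \<in> neighbours V E a" and vb: "v \<in> neighbours V E b"
    using v aV bV unfolding neighbours_def by (auto simp: adj_commute)
  obtain a' where Na: "neighbours V E a = {v, a'}" "a' \<noteq> v"
    by (rule card_2_obtain_other[OF deg(1) va])
  obtain b' where Nb: "neighbours V E b = {v, b'}" "b' \<noteq> v"
    by (rule card_2_obtain_other[OF deg(2) vb])
  have a'V: "a' \<in> V" "adj E a a'" and b'V: "b' \<in> V" "adj E b b'"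
    using Na(1) Nb(1) unfolding neighbours_def by auto
  have distinct: "a' \<noteq> a" "b' \<noteq> b" "a' \<noteq> b" "b' \<noteq> a" "v \<noteq> a" "v \<noteq> b"
    using loop_free a'V(2) b'V(2) aV(2) bV(2) ab unfolding loop_free_def
    by (auto simp: adj_commute)
  have through_v: "card (mis_through V E {v} {}) \<le> mis_bound t (card V - 3)"
    using card_mis_through_vertex_le[of v 3] Nv deg v by simp
  have closed_pair: "{a, b, v, a', b'} \<subseteq> closed_neighbourhood V E X"
    if "X = {a, b} \<or> X = {a, b'} \<or> X = {b, a'}" for X
    using that aV bV v a'V b'V unfolding closed_neighbourhood_def by (auto simp: adj_commute)
  have finite_closed: "finite (closed_neighbourhood V E X)" if "X \<subseteq> V" for X
    using closed_neighbourhood_subset[OF that] finite_V by (rule finite_subset)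
  have mis_le: "mis V E \<le> card (mis_through V E {v} {}) + card (mis_through V E {a, b} {})
      + card (mis_through V E {a, b'} {}) + card (mis_through V E {b, a'} {})"
    by (rule mis_le_sum_path_branches[OF v aV(1) bV(1) Nv(1) Na(1) Nb(1)])
  show ?thesis
  proof (cases "a' = b'")
    case True
    have "mis_through V E {a, b'} {} = {}"
      by (rule mis_through_adjacent[of a _ b']) (use True a'V(2) in auto)
    moreover have "mis_through V E {b, a'} {} = {}"
      by (rule mis_through_adjacent[of b _ a']) (use True b'V(2) in auto)
    moreover have "card {a, b, v, a'} = 4" using distinct True Nv(2) Na(2) by auto
    then have card4: "4 \<le> card (closed_neighbourhood V E {a, b} \<union> {})"
      using closed_pair[of "{a, b}"] finite_closed[of "{a, b}"] aV bV
      by (metis card_mono insert_subset empty_subsetI sup_bot.right_neutral)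
    then have "card (mis_through V E {a, b} {}) \<le> mis_bound t (card V - 4)"
      using aV bV by (intro card_mis_through_le_bound) auto
    moreover have "4 \<le> card V"
      using card_closed_neighbourhood_le[of "{a, b}" "{}"] aV bV card4 by simp
    ultimately show ?thesis
      using mis_le through_v mis_bound_branch_344[of "card V" t] by simp
  next
    case False
    have "card {a, b, v, a', b'} = 5" using distinct False Nv(2) Na(2) Nb(2) by auto
    then have card5: "5 \<le> card (closed_neighbourhood V E X \<union> {})"
      if "X = {a, b} \<or> X = {a, b'} \<or> X = {b, a'}" for X
      using closed_pair[OF that] finite_closed[of X] that aV bV a'V b'V
      by (metis card_mono empty_subsetI insert_subset sup_bot.right_neutral)
    have "5 \<le> card V"
      using card_closed_neighbourhood_le[of "{a, b}" "{}"] aV bV card5[of "{a, b}"] by simp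
    have through: "card (mis_through V E X {}) \<le> mis_bound t (card V - 5)"
      if "X = {a, b} \<or> X = {a, b'} \<or> X = {b, a'}" for X
      using card5[OF that] that aV bV a'V b'V by (intro card_mis_through_le_bound) auto
    have "mis V E \<le> mis_bound t (card V - 3) + 3 * mis_bound t (card V - 5)"
      using mis_le through_v through[of "{a, b}"] through[of "{a, b'}"] through[of "{b, a'}"]
      by simp
    also have "\<dots> \<le> mis_bound t (card V)"
      by (rule mis_bound_branch_3555) fact
    finally show ?thesis .
  qed
qed

lemma mis_le_bound: "mis V E \<le> mis_bound t (card V)"
proof (cases "V = {}")
  case True
  then show ?thesis
    by (simp add: mis_empty mis_bound_def mis_extremal_def triangle_free_bound_def)
next
  case False
  then obtain v where v: "v \<in> V"
    and min: "\<And>u. u \<in> V \<Longrightarrow> card (neighbours V E v) \<le> card (neighbours V E u)"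
    using ex_has_least_nat[of "\<lambda>x. x \<in> V" _ "\<lambda>x. card (neighbours V E x)"] by blast
  show ?thesis
  proof (cases "card (neighbours V E v) = 2")
    case False
    with v min show ?thesis by (rule mis_le_bound_if_min_degree_ne_2)
  next
    case True
    then obtain a b where ab: "neighbours V E v = {a, b}" "a \<noteq> b"
      by (auto simp: card_2_iff)
    then have ba: "neighbours V E v = {b, a}" "b \<noteq> a" by auto
    have min2: "\<And>u. u \<in> V \<Longrightarrow> 2 \<le> card (neighbours V E u)"
      using min True by fastforce
    have "a \<in> V" "b \<in> V" using ab unfolding neighbours_def by auto
    then consider "3 \<le> card (neighbours V E b)" | "3 \<le> card (neighbours V E a)"
      | "card (neighbours V E a) = 2" "card (neighbours V E b) = 2"
      using min2 by fastforce
    then show ?thesis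
    proof cases
      case 1
      with v ab min2 show ?thesis by (rule mis_le_bound_if_neighbour_degree_ge_3)
    next
      case 2
      with v ba min2 show ?thesis by (rule mis_le_bound_if_neighbour_degree_ge_3)
    next
      case 3
      then show ?thesis
        using mis_le_bound_if_isolated_triangle[OF v ab] mis_le_bound_if_induced_path[OF v ab]
        by blast
    qed
  qed
qed

end

theorem mis_le_mis_bound:
  assumes "loop_free E" "finite V" "\<not> has_induced_triangle_matching V E (t + 1)"
  shows "mis V E \<le> mis_bound t (card V)"
  using assms
proof (induction "card V" arbitrary: V t rule: less_induct)
  case less
  interpret mis_bound_induction V E t
  proof
    fix W s
    assume W: "W \<subseteq> V" "W \<noteq> {}"
      and "\<not> has_induced_triangle_matching (V - W) E (s + 1)"
    moreover have "card (V - W) = card V - card W"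
      using W less.prems(2) by (simp add: card_Diff_subset finite_subset)
    moreover have "card (V - W) < card V"
      using W less.prems(2) by (intro psubset_card_mono) auto
    ultimately show "mis (V - W) E \<le> mis_bound s (card V - card W)"
      using less.hyps less.prems by (metis finite_Diff)
  qed (use less.prems in auto)
  show ?case by (rule mis_le_bound)
qed

lemma mis_mult_le_mis_Un:
  assumes lf: "loop_free E" and "finite A" "finite C" and disjoint: "A \<inter> C = {}"
    and no_edge: "\<And>x y. x \<in> A \<Longrightarrow> y \<in> C \<Longrightarrow> \<not> adj E x y"
  shows "mis A E * mis C E \<le> mis (A \<union> C) E"
proof -
  let ?MA = "{S. maximal_independent_set A E S}" and ?MC = "{S. maximal_independent_set C E S}"
  have "inj_on (\<lambda>(S1, S2). S1 \<union> S2) (?MA \<times> ?MC)"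
  proof (rule inj_onI, clarsimp)
    fix S1 S2 S1' S2'
    assume "maximal_independent_set A E S1" "maximal_independent_set C E S2"
      "maximal_independent_set A E S1'" "maximal_independent_set C E S2'"
      and eq: "S1 \<union> S2 = S1' \<union> S2'"
    then have "S1 \<subseteq> A" "S2 \<subseteq> C" "S1' \<subseteq> A" "S2' \<subseteq> C"
      unfolding maximal_independent_set_def independent_set_def by auto
    then have "S1 = (S1 \<union> S2) \<inter> A" "S1' = (S1' \<union> S2') \<inter> A"
      "S2 = (S1 \<union> S2) \<inter> C" "S2' = (S1' \<union> S2') \<inter> C"
      using disjoint by auto
    then show "S1 = S1' \<and> S2 = S2'" using eq by metis
  qed
  moreover have "maximal_independent_set (A \<union> C) E (S1 \<union> S2)"
    if "maximal_independent_set A E S1" "maximal_independent_set C E S2" for S1 S2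
  proof -
    have ind1: "independent_set A E S1" and dom1: "\<forall>w\<in>A - S1. \<exists>s\<in>S1. adj E w s"
      and ind2: "independent_set C E S2" and dom2: "\<forall>w\<in>C - S2. \<exists>s\<in>S2. adj E w s"
      using that maximal_independent_set_iff_dominating[OF lf] by auto
    have sub: "S1 \<subseteq> A" "S2 \<subseteq> C" using ind1 ind2 by (auto simp: independent_set_def)
    have "independent_set (A \<union> C) E (S1 \<union> S2)"
      unfolding independent_set_def
    proof (intro conjI ballI)
      show "S1 \<union> S2 \<subseteq> A \<union> C" using sub by auto
      fix u w assume "u \<in> S1 \<union> S2" "w \<in> S1 \<union> S2"
      then show "\<not> adj E u w"
        using ind1 ind2 sub no_edge unfolding independent_set_def by (metis Un_iff adj_commute subsetD)
    qed
    moreover have "\<forall>w\<in>(A \<union> C) - (S1 \<union> S2). \<exists>s\<in>S1 \<union> S2. adj E w s"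
      using dom1 dom2 by blast
    ultimately show ?thesis using maximal_independent_set_iff_dominating[OF lf] by blast
  qed
  ultimately have "card (?MA \<times> ?MC) \<le> card {S. maximal_independent_set (A \<union> C) E S}"
    using assms(2,3) by (intro card_inj_on_le finite_maximal_independent_sets) auto
  then show ?thesis unfolding mis_def by (simp add: card_cartesian_product)
qed

lemma card_le_mis_clique:
  assumes lf: "loop_free E" and "finite K" and clique: "\<And>x y. x \<in> K \<Longrightarrow> y \<in> K \<Longrightarrow> x \<noteq> y \<Longrightarrow> adj E x y"
  shows "card K \<le> mis K E"
  unfolding mis_def
proof (rule card_inj_on_le)
  show "inj_on (\<lambda>x. {x}) K" by simp
  show "(\<lambda>x. {x}) ` K \<subseteq> {S. maximal_independent_set K E S}"
  proof clarsimp
    fix x assume x: "x \<in> K"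
    then have "independent_set K E {x}" using lf by (simp add: independent_set_def loop_free_def)
    moreover have "\<forall>w\<in>K - {x}. \<exists>s\<in>{x}. adj E w s" using clique x by auto
    ultimately show "maximal_independent_set K E {x}"
      using maximal_independent_set_iff_dominating[OF lf] by blast
  qed
qed (simp add: finite_maximal_independent_sets assms(2))

lemma mis_mult_clique_le:
  assumes lf: "loop_free E" and "a \<le> b"
    and clique: "\<And>x y. a \<le> x \<Longrightarrow> x < b \<Longrightarrow> a \<le> y \<Longrightarrow> y < b \<Longrightarrow> x \<noteq> y \<Longrightarrow> adj E x y"
    and no_edge: "\<And>x y. x < a \<Longrightarrow> a \<le> y \<Longrightarrow> y < b \<Longrightarrow> \<not> adj E x y"
  shows "mis {0..<a} E * (b - a) \<le> mis {0..<b} E"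
proof -
  have "mis {0..<a} E * (b - a) \<le> mis {0..<a} E * mis {a..<b} E"
    using card_le_mis_clique[OF lf, of "{a..<b}"] clique by (intro mult_le_mono2) auto
  also have "\<dots> \<le> mis ({0..<a} \<union> {a..<b}) E"
    by (rule mis_mult_le_mis_Un[OF lf]) (use no_edge in auto)
  also have "{0..<a} \<union> {a..<b} = {0..<b}" using \<open>a \<le> b\<close> by auto
  finally show ?thesis .
qed

lemma adj_of_relation: "adj {{x, y} | x y. R x y} u v \<longleftrightarrow> R u v \<or> R v u"
  unfolding adj_def by (auto simp: doubleton_eq_iff)

lemma three_distinct_not_same_half:
  fixes a b c :: nat
  assumes "a div 2 = b div 2" "b div 2 = c div 2"
  shows "a = b \<or> b = c \<or> a = c"
proof -
  have "a = 2 * (a div 2) + a mod 2" "b = 2 * (b div 2) + b mod 2" "c = 2 * (c div 2) + c mod 2"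
    by simp_all
  moreover have "a mod 2 = 0 \<or> a mod 2 = 1" "b mod 2 = 0 \<or> b mod 2 = 1" "c mod 2 = 0 \<or> c mod 2 = 1"
    by arith+
  ultimately show ?thesis using assms by linarith
qed

text \<open>The extremal graph with \<open>p\<close> triangles: \<open>x\<close> lies in the triangle \<open>x div 3\<close> if \<open>x < 3 p\<close>,
  and otherwise in an edge (or, for the last vertex, an isolated vertex).\<close>
definition triangle_block :: "nat \<Rightarrow> nat \<Rightarrow> nat" where
  "triangle_block p x = (if x < 3 * p then x div 3 else p + (x - 3 * p) div 2)"

definition triangles_edges_graph :: "nat \<Rightarrow> nat \<Rightarrow> nat set set" where
  "triangles_edges_graph n p =
    {{x, y} | x y. x < n \<and> y < n \<and> x \<noteq> y \<and> triangle_block p x = triangle_block p y}"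

lemma adj_triangles_edges_graph:
  "adj (triangles_edges_graph n p) u v \<longleftrightarrow>
    u < n \<and> v < n \<and> u \<noteq> v \<and> triangle_block p u = triangle_block p v"
  unfolding triangles_edges_graph_def adj_of_relation by auto

lemma loop_free_triangles_edges_graph: "loop_free (triangles_edges_graph n p)"
  by (simp add: loop_free_def adj_triangles_edges_graph)

lemma simple_graph_triangles_edges_graph: "simple_graph {0..<n} (triangles_edges_graph n p)"
  unfolding simple_graph_def triangles_edges_graph_def by auto

lemma mis_triangles_edges_graph_triangles:
  "i \<le> p \<Longrightarrow> 3 * p \<le> n \<Longrightarrow> 3 ^ i \<le> mis {0..<3 * i} (triangles_edges_graph n p)"
proof (induction i)
  case 0
  then show ?case by (simp add: mis_empty)
next
  case (Suc i)
  have "mis {0..<3 * i} (triangles_edges_graph n p) * (3 * Suc i - 3 * i)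
      \<le> mis {0..<3 * Suc i} (triangles_edges_graph n p)"
  proof (rule mis_mult_clique_le[OF loop_free_triangles_edges_graph])
    fix x y assume "3 * i \<le> x" "x < 3 * Suc i" "3 * i \<le> y" "y < 3 * Suc i" "x \<noteq> y"
    then show "adj (triangles_edges_graph n p) x y"
      using Suc.prems div_nat_eqI[of 3 i x] div_nat_eqI[of 3 i y]
      unfolding adj_triangles_edges_graph triangle_block_def by auto
  next
    fix x y assume "x < 3 * i" "3 * i \<le> y" "y < 3 * Suc i"
    then show "\<not> adj (triangles_edges_graph n p) x y"
      using Suc.prems less_mult_imp_div_less[of x i 3] div_nat_eqI[of 3 i y]
      unfolding adj_triangles_edges_graph triangle_block_def by auto
  qed simp
  then show ?case using Suc by simp
qed

lemma mis_triangles_edges_graph: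
  "3 * p + 2 * j \<le> n \<Longrightarrow> 3 ^ p * 2 ^ j \<le> mis {0..<3 * p + 2 * j} (triangles_edges_graph n p)"
proof (induction j)
  case 0
  then show ?case using mis_triangles_edges_graph_triangles[of p p n] by simp
next
  case (Suc j)
  have "mis {0..<3 * p + 2 * j} (triangles_edges_graph n p) * ((3 * p + 2 * Suc j) - (3 * p + 2 * j))
      \<le> mis {0..<3 * p + 2 * Suc j} (triangles_edges_graph n p)"
  proof (rule mis_mult_clique_le[OF loop_free_triangles_edges_graph])
    fix x y
    assume "3 * p + 2 * j \<le> x" "x < 3 * p + 2 * Suc j" "3 * p + 2 * j \<le> y" "y < 3 * p + 2 * Suc j"
      "x \<noteq> y"
    then show "adj (triangles_edges_graph n p) x y"
      using Suc.prems div_nat_eqI[of 2 j "x - 3 * p"] div_nat_eqI[of 2 j "y - 3 * p"]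
      unfolding adj_triangles_edges_graph triangle_block_def by auto
  next
    fix x y assume "x < 3 * p + 2 * j" "3 * p + 2 * j \<le> y" "y < 3 * p + 2 * Suc j"
    then show "\<not> adj (triangles_edges_graph n p) x y"
      using Suc.prems less_mult_imp_div_less[of "x - 3 * p" j 2] less_mult_imp_div_less[of x p 3]
        div_nat_eqI[of 2 j "y - 3 * p"]
      unfolding adj_triangles_edges_graph triangle_block_def by auto
  qed simp
  then show ?case using Suc by simp
qed

lemma triangle_block_less_iff: "triangle_block p w < p \<longleftrightarrow> w < 3 * p"
  unfolding triangle_block_def using less_mult_imp_div_less[of w p 3] by auto

lemma triangle_in_triangles_edges_graph:
  assumes "triangle {0..<n} (triangles_edges_graph n p) T"
  shows "\<exists>c<p. T = {3 * c, 3 * c + 1, 3 * c + 2}"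
proof -
  obtain x y z where T: "T = {x, y, z}" "x \<noteq> y" "y \<noteq> z" "x \<noteq> z"
    and "adj (triangles_edges_graph n p) x y" "adj (triangles_edges_graph n p) y z"
    using assms by (rule triangleE)
  then have same: "triangle_block p x = triangle_block p y" "triangle_block p y = triangle_block p z"
    by (auto simp: adj_triangles_edges_graph)
  show ?thesis
  proof (cases "x < 3 * p")
    case True
    define c where "c = x div 3"
    have yz: "y < 3 * p" "z < 3 * p"
      using same triangle_block_less_iff[of p x] triangle_block_less_iff[of p y]
        triangle_block_less_iff[of p z] True by auto
    have "y div 3 = c" "z div 3 = c"
      using same True yz unfolding c_def triangle_block_def by auto
    then have "T \<subseteq> {3 * c, 3 * c + 1, 3 * c + 2}"
      unfolding T c_def by auto
    moreover have "card T = card {3 * c, 3 * c + 1, 3 * c + 2}" using T by auto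
    ultimately have "T = {3 * c, 3 * c + 1, 3 * c + 2}"
      by (intro card_subset_eq) auto
    moreover have "c < p" using True less_mult_imp_div_less[of x p 3] unfolding c_def by simp
    ultimately show ?thesis by blast
  next
    case False
    have yz: "\<not> y < 3 * p" "\<not> z < 3 * p"
      using same triangle_block_less_iff[of p x] triangle_block_less_iff[of p y]
        triangle_block_less_iff[of p z] False by auto
    have "(x - 3 * p) div 2 = (y - 3 * p) div 2" "(y - 3 * p) div 2 = (z - 3 * p) div 2"
      using same False yz unfolding triangle_block_def by auto
    then have "x - 3 * p = y - 3 * p \<or> y - 3 * p = z - 3 * p \<or> x - 3 * p = z - 3 * p"
      by (rule three_distinct_not_same_half)
    then show ?thesis using T False yz by auto
  qed
qed

lemma no_matching_triangles_edges_graph: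
  assumes "p \<le> t"
  shows "\<not> has_induced_triangle_matching {0..<n} (triangles_edges_graph n p) (t + 1)"
proof
  assume "has_induced_triangle_matching {0..<n} (triangles_edges_graph n p) (t + 1)"
  then obtain M where M: "induced_triangle_matching {0..<n} (triangles_edges_graph n p) M"
    "card M = t + 1"
    unfolding has_induced_triangle_matching_def by blast
  have "M \<subseteq> (\<lambda>c. {3 * c, 3 * c + 1, 3 * c + 2}) ` {..<p}"
  proof
    fix T assume "T \<in> M"
    then have "triangle {0..<n} (triangles_edges_graph n p) T"
      using M(1) by (simp add: induced_triangle_matching_def)
    then show "T \<in> (\<lambda>c. {3 * c, 3 * c + 1, 3 * c + 2}) ` {..<p}"
      using triangle_in_triangles_edges_graph by blast
  qed
  then have "card M \<le> card ((\<lambda>c. {3 * c, 3 * c + 1, 3 * c + 2}) ` {..<p})"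
    by (intro card_mono) auto
  also have "\<dots> \<le> p" using card_image_le[of "{..<p}"] by simp
  finally show False using M(2) assms by simp
qed

text \<open>The extremal triangle-free graph for odd \<open>n\<close>: a pentagon on \<open>{0..<5}\<close>, then edges.\<close>
definition pentagon_block :: "nat \<Rightarrow> nat" where
  "pentagon_block x = (if x < 5 then 0 else Suc ((x - 5) div 2))"

definition pentagon_edges_graph :: "nat \<Rightarrow> nat set set" where
  "pentagon_edges_graph n = {{x, y} | x y. x < n \<and> y < n \<and> x \<noteq> y \<and>
     pentagon_block x = pentagon_block y \<and> (x < 5 \<longrightarrow> y = (x + 1) mod 5)}"

lemma adj_pentagon_edges_graph:
  "adj (pentagon_edges_graph n) u v \<longleftrightarrow> u < n \<and> v < n \<and> u \<noteq> v \<and>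
     pentagon_block u = pentagon_block v \<and> (u < 5 \<longrightarrow> v = (u + 1) mod 5 \<or> u = (v + 1) mod 5)"
  unfolding pentagon_edges_graph_def adj_of_relation pentagon_block_def
  by (auto split: if_splits)

lemma loop_free_pentagon_edges_graph: "loop_free (pentagon_edges_graph n)"
  by (simp add: loop_free_def adj_pentagon_edges_graph)

lemma simple_graph_pentagon_edges_graph: "simple_graph {0..<n} (pentagon_edges_graph n)"
  unfolding simple_graph_def pentagon_edges_graph_def by auto

lemma adj_pentagon:
  "u < 5 \<Longrightarrow> v < 5 \<Longrightarrow> 5 \<le> n \<Longrightarrow>
    adj (pentagon_edges_graph n) u v \<longleftrightarrow> u \<noteq> v \<and> (v = (u + 1) mod 5 \<or> u = (v + 1) mod 5)"
  unfolding adj_pentagon_edges_graph pentagon_block_def by auto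

lemma mis_pentagon:
  assumes "5 \<le> n"
  shows "5 \<le> mis {0..<5} (pentagon_edges_graph n)"
proof -
  have V: "{0..<5::nat} = {0, 1, 2, 3, 4}" by auto
  have "maximal_independent_set {0..<5} (pentagon_edges_graph n) S"
    if "S \<in> {{0, 2}, {1, 3}, {2, 4}, {0, 3}, {1, 4}}" for S
  proof -
    have "independent_set {0..<5} (pentagon_edges_graph n) S \<and>
        (\<forall>w\<in>{0..<5} - S. \<exists>s\<in>S. adj (pentagon_edges_graph n) w s)"
      using that assms unfolding independent_set_def V by (auto simp: adj_pentagon)
    then show ?thesis
      using maximal_independent_set_iff_dominating[OF loop_free_pentagon_edges_graph] by blast
  qed
  then have "card {{0, 2}, {1, 3}, {2, 4}, {0, 3}, {1, 4::nat}} \<le> mis {0..<5} (pentagon_edges_graph n)"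
    unfolding mis_def by (intro card_mono finite_maximal_independent_sets) auto
  moreover have "card {{0, 2}, {1, 3}, {2, 4}, {0, 3}, {1, 4::nat}} = 5"
    by (simp add: doubleton_eq_iff)
  ultimately show ?thesis by simp
qed

lemma mis_pentagon_edges_graph:
  "5 + 2 * j \<le> n \<Longrightarrow> 5 * 2 ^ j \<le> mis {0..<5 + 2 * j} (pentagon_edges_graph n)"
proof (induction j)
  case 0
  then show ?case using mis_pentagon by simp
next
  case (Suc j)
  have "mis {0..<5 + 2 * j} (pentagon_edges_graph n) * ((5 + 2 * Suc j) - (5 + 2 * j))
      \<le> mis {0..<5 + 2 * Suc j} (pentagon_edges_graph n)"
  proof (rule mis_mult_clique_le[OF loop_free_pentagon_edges_graph])
    fix x y
    assume "5 + 2 * j \<le> x" "x < 5 + 2 * Suc j" "5 + 2 * j \<le> y" "y < 5 + 2 * Suc j" "x \<noteq> y"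
    then show "adj (pentagon_edges_graph n) x y"
      using Suc.prems div_nat_eqI[of 2 j "x - 5"] div_nat_eqI[of 2 j "y - 5"]
      unfolding adj_pentagon_edges_graph pentagon_block_def by auto
  next
    fix x y assume "x < 5 + 2 * j" "5 + 2 * j \<le> y" "y < 5 + 2 * Suc j"
    then show "\<not> adj (pentagon_edges_graph n) x y"
      using Suc.prems less_mult_imp_div_less[of "x - 5" j 2] div_nat_eqI[of 2 j "y - 5"]
      unfolding adj_pentagon_edges_graph pentagon_block_def by auto
  qed simp
  then show ?case using Suc by simp
qed

lemma pentagon_triangle_free:
  fixes x y z :: nat
  assumes "x < 5" "y < 5" "z < 5" "x \<noteq> y" "y \<noteq> z" "x \<noteq> z"
    and "y = (x + 1) mod 5 \<or> x = (y + 1) mod 5" "z = (y + 1) mod 5 \<or> y = (z + 1) mod 5"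
    "z = (x + 1) mod 5 \<or> x = (z + 1) mod 5"
  shows False
  using assms by (auto simp: mod_Suc split: if_splits)

lemma no_triangle_pentagon_edges_graph: "\<not> triangle {0..<n} (pentagon_edges_graph n) T"
proof
  assume "triangle {0..<n} (pentagon_edges_graph n) T"
  then obtain x y z where T: "x \<noteq> y" "y \<noteq> z" "x \<noteq> z"
    and adj: "adj (pentagon_edges_graph n) x y" "adj (pentagon_edges_graph n) y z"
      "adj (pentagon_edges_graph n) x z"
    by (rule triangleE)
  then have same: "pentagon_block x = pentagon_block y" "pentagon_block y = pentagon_block z"
    by (auto simp: adj_pentagon_edges_graph)
  show False
  proof (cases "x < 5")
    case True
    then have "y < 5" "z < 5" using same unfolding pentagon_block_def by (auto split: if_splits)
    then show False
      using pentagon_triangle_free[of x y z] True T adj by (auto simp: adj_pentagon_edges_graph)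
  next
    case False
    then have yz: "\<not> y < 5" "\<not> z < 5" using same unfolding pentagon_block_def by (auto split: if_splits)
    then have "(x - 5) div 2 = (y - 5) div 2" "(y - 5) div 2 = (z - 5) div 2"
      using same False unfolding pentagon_block_def by auto
    then have "x - 5 = y - 5 \<or> y - 5 = z - 5 \<or> x - 5 = z - 5"
      by (rule three_distinct_not_same_half)
    then show False using T False yz by auto
  qed
qed

lemma no_matching_pentagon_edges_graph:
  "\<not> has_induced_triangle_matching {0..<n} (pentagon_edges_graph n) 1"
proof
  assume "has_induced_triangle_matching {0..<n} (pentagon_edges_graph n) 1"
  then obtain M where M: "induced_triangle_matching {0..<n} (pentagon_edges_graph n) M" "card M = 1"
    unfolding has_induced_triangle_matching_def by blast
  then obtain T where "M = {T}" by (auto simp: card_1_singleton_iff)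
  then show False
    using M(1) no_triangle_pentagon_edges_graph unfolding induced_triangle_matching_def by auto
qed

lemma mis_bound_closed_form:
  assumes "3 * t \<le> n" and "t = 0 \<Longrightarrow> n \<ge> 4"
  shows "mis_bound t n =
    (if even (n - 3 * t) then 3 ^ t * 2 ^ ((n - 3 * t) div 2)
     else if t > 0 then 3 ^ (t - 1) * 2 ^ ((n - 3 * t + 3) div 2)
     else 5 * 2 ^ ((n - 5) div 2))"
  using assms by (cases "t = 0") (simp_all add: mis_bound_eq mis_extremal_def triangle_free_bound_def)

lemma extremal_graph_exists:
  assumes "3 * t \<le> n" and "t = 0 \<Longrightarrow> n \<ge> 4"
  shows "\<exists>E. simple_graph {0..<n} E \<and> \<not> has_induced_triangle_matching {0..<n} E (t + 1) \<and>
    mis_bound t n \<le> mis {0..<n} E"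
proof (cases "even (n - 3 * t)")
  case True
  define j where "j = (n - 3 * t) div 2"
  have n: "3 * t + 2 * j = n" using True assms(1) unfolding j_def by simp
  have "mis_bound t n = 3 ^ t * 2 ^ j" using mis_bound_closed_form[OF assms] True j_def by simp
  then show ?thesis
    using simple_graph_triangles_edges_graph no_matching_triangles_edges_graph[of t t n]
      mis_triangles_edges_graph[of t j n] n by auto
next
  case odd: False
  show ?thesis
  proof (cases "t > 0")
    case True
    define j where "j = (n - 3 * t + 3) div 2"
    have n: "3 * (t - 1) + 2 * j = n" using odd True assms(1) unfolding j_def by simp
    have "mis_bound t n = 3 ^ (t - 1) * 2 ^ j" using mis_bound_closed_form[OF assms] odd True j_def by simp
    then show ?thesis
      using simple_graph_triangles_edges_graph no_matching_triangles_edges_graph[of "t - 1" t n]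
        mis_triangles_edges_graph[of "t - 1" j n] n by auto
  next
    case False
    then have "t = 0" using odd by simp
    moreover have "n \<noteq> 4" using odd \<open>t = 0\<close> by auto
    ultimately have "n \<ge> 5" using assms(2) by simp
    define j where "j = (n - 5) div 2"
    have n: "5 + 2 * j = n" using odd \<open>t = 0\<close> \<open>n \<ge> 5\<close> unfolding j_def by simp
    have "mis_bound t n = 5 * 2 ^ j" using mis_bound_closed_form[OF assms] odd \<open>t = 0\<close> j_def by simp
    then show ?thesis
      using simple_graph_pentagon_edges_graph no_matching_pentagon_edges_graph[of n]
        mis_pentagon_edges_graph[of j n] n \<open>t = 0\<close> by auto
  qed
qed

lemma mis_t_eqI:
  assumes upper: "\<And>E. simple_graph {0..<n} E \<Longrightarrow>
      \<not> has_induced_triangle_matching {0..<n} E (t + 1) \<Longrightarrow> mis {0..<n} E \<le> b"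
    and attained: "\<exists>E. simple_graph {0..<n} E \<and> \<not> has_induced_triangle_matching {0..<n} E (t + 1)
      \<and> b \<le> mis {0..<n} E"
  shows "mis_t t n = b"
proof -
  let ?S = "{mis {0..<n} E | E. simple_graph {0..<n} E \<and>
    \<not> has_induced_triangle_matching {0..<n} E (t + 1)}"
  have "?S \<subseteq> (\<lambda>E. mis {0..<n} E) ` Pow (Pow {0..<n})"
  proof
    fix y assume "y \<in> ?S"
    then obtain E where y: "y = mis {0..<n} E" and "simple_graph {0..<n} E" by blast
    then have "E \<subseteq> Pow {0..<n}" unfolding simple_graph_def by fast
    then show "y \<in> (\<lambda>E. mis {0..<n} E) ` Pow (Pow {0..<n})" using y by blast
  qed
  then have "finite ?S" by (rule finite_subset) simp
  moreover obtain E where "simple_graph {0..<n} E"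
    "\<not> has_induced_triangle_matching {0..<n} E (t + 1)" "b \<le> mis {0..<n} E"
    using attained by blast
  then have "b \<in> ?S" using upper[of E] by (intro CollectI exI[of _ E]) simp
  ultimately show ?thesis
    unfolding mis_t_def using upper by (intro Max_eqI) auto
qed

theorem mainTheorem1:
  fixes n t :: nat
  assumes "n \<ge> 1" and "3 * t \<le> n" and "t = 0 \<Longrightarrow> n \<ge> 4"
  shows "mis_t t n =
    (if even (n - 3 * t) then 3 ^ t * 2 ^ ((n - 3 * t) div 2)
     else if t > 0 then 3 ^ (t - 1) * 2 ^ ((n - 3 * t + 3) div 2)
     else 5 * 2 ^ ((n - 5) div 2))"
proof -
  text \<open>The hypothesis \<open>n \<ge> 1\<close> is implied by the other two.\<close>
  have "mis_t t n = mis_bound t n"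
  proof (rule mis_t_eqI)
    fix E
    assume "simple_graph {0..<n} E" "\<not> has_induced_triangle_matching {0..<n} E (t + 1)"
    then show "mis {0..<n} E \<le> mis_bound t n"
      using mis_le_mis_bound[OF simple_graph_loop_free] by fastforce
  qed (rule extremal_graph_exists[OF assms(2,3)])
  then show ?thesis using mis_bound_closed_form[OF assms(2,3)] by simp
qed

end
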